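(* For $T\ge1$, let $N(T)$ be the number of distinct orbits $o$ in $\mathbb{Z}^2$ with $\operatorname{length}(o)\le T$, and let $S(T)$ be the sum of their lengths. Then: - $N(T)=\frac1{96}T^2+O(T)$; - $S(T)=\frac1{144}T^3+O(T^2)$; - consequently $S(T)/N(T)=\frac23T+O(1)$.
   Context: Define $\mathcal K_1(x_1,x_2)=(-x_1+x_2,x_2)$ and $\mathcal K_2(x_1,x_2)=(x_1,x_1-x_2)$ on $\mathbb{Z}^2$. The orbit $o(\mathbf{x})$ is the set of points obtained from $\mathbf{x}$ by repeated application of $\mathcal K_1,\mathcal K_2$: $(x_1,x_2)$, $(-x_1+x_2,x_2)$, $(-x_1+x_2,-x_1)$, $(-x_2,-x_1)$, $(-x_2,x_1-x_2)$, $(x_1,x_1-x_2)$. Orbits partition $\mathbb{Z}^2$. The orbit length is the Euclidean length of the closed path through the six points in the listed order: $$\operatorname{length}(o(\mathbf{x}))=2\big(|2x_1-x_2|+|x_1+x_2|+|2x_2-x_1|\big).$$ *)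

theory Defs
  imports Complex_Main
begin

definition K1 :: "int \<times> int \<Rightarrow> int \<times> int" where
  "K1 p = (- fst p + snd p, snd p)"

definition K2 :: "int \<times> int \<Rightarrow> int \<times> int" where
  "K2 p = (fst p, fst p - snd p)"

definition Kstep :: "((int \<times> int) \<times> (int \<times> int)) set" where
  "Kstep = {(p, K1 p) | p. True} \<union> {(p, K2 p) | p. True}"

definition orbit :: "int \<times> int \<Rightarrow> (int \<times> int) set" where
  "orbit x = {y. (x, y) \<in> Kstep\<^sup>*}"

text \<open>Length of the closed path through the six orbit points listed from x.\<close>
definition pt_length :: "int \<times> int \<Rightarrow> real" where
  "pt_length p = 2 * (\<bar>2 * fst p - snd p\<bar> + \<bar>fst p + snd p\<bar> + \<bar>2 * snd p - fst p\<bar>)"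

definition orbit_length :: "(int \<times> int) set \<Rightarrow> real" where
  "orbit_length ob = pt_length (SOME x. x \<in> ob)"

definition orbits :: "(int \<times> int) set set" where
  "orbits = range orbit"

definition N_count :: "real \<Rightarrow> nat" where
  "N_count T = card {ob \<in> orbits. orbit_length ob \<le> T}"

definition S_sum :: "real \<Rightarrow> real" where
  "S_sum T = (\<Sum>ob \<in> {ob \<in> orbits. orbit_length ob \<le> T}. orbit_length ob)"

end

theory Submission
  imports Defs
begin

text \<open>
  Every orbit other than \<open>{(0, 0)}\<close> is a hexagon meeting the cone
  \<open>a + b \<ge> 0, 2 b \<le> a, b < 2 a\<close> in exactly one point \<open>(a, b)\<close>, and on that cone the
  length is \<open>4 (2 a - b)\<close>. For \<open>m \<ge> 1\<close> the cone contains \<open>m / 3 + O(1)\<close> points with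
  \<open>2 a - b = m\<close>, so summing over \<open>m \<le> T / 4\<close> gives \<open>N(T) = T\<^sup>2 / 96 + O(T)\<close> and
  \<open>S(T) = T\<^sup>3 / 144 + O(T\<^sup>2)\<close>. The estimate for \<open>S / N\<close> follows from these two alone,
  since \<open>N(T)\<close> grows like \<open>T\<^sup>2\<close>.
\<close>

section \<open>Orbits\<close>

lemma Kstep_iff: "(p, q) \<in> Kstep \<longleftrightarrow> q = K1 p \<or> q = K2 p"
  unfolding Kstep_def by blast

lemma K1_K1 [simp]: "K1 (K1 p) = p"
  by (simp add: K1_def)

lemma K2_K2 [simp]: "K2 (K2 p) = p"
  by (simp add: K2_def)

lemma sym_Kstep: "sym Kstep"
  by (rule symI) (auto simp: Kstep_iff)

lemma mem_orbit_self [simp]: "x \<in> orbit x"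
  by (simp add: orbit_def)

lemma orbit_eq_if_mem: "y \<in> orbit x \<Longrightarrow> orbit y = orbit x"
  using sym_Kstep[THEN sym_rtrancl] unfolding orbit_def
  by (auto dest: symD intro: rtrancl_trans)

lemma pt_length_K1 [simp]: "pt_length (K1 p) = pt_length p"
  by (simp add: pt_length_def K1_def abs_minus_commute algebra_simps)

lemma pt_length_K2 [simp]: "pt_length (K2 p) = pt_length p"
  by (simp add: pt_length_def K2_def abs_minus_commute algebra_simps)

lemma pt_length_eq_if_mem: "y \<in> orbit x \<Longrightarrow> pt_length y = pt_length x"
  unfolding orbit_def mem_Collect_eq
  by (induction rule: rtrancl_induct) (auto simp: Kstep_iff)

lemma orbit_length_orbit: "orbit_length (orbit x) = pt_length x"
proof -
  have "(SOME y. y \<in> orbit x) \<in> orbit x" by (rule someI) (rule mem_orbit_self)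
  then show ?thesis by (simp add: orbit_length_def pt_length_eq_if_mem)
qed

lemma K1_mem_orbit: "y \<in> orbit x \<Longrightarrow> K1 y \<in> orbit x"
  and K2_mem_orbit: "y \<in> orbit x \<Longrightarrow> K2 y \<in> orbit x"
  by (auto simp: orbit_def Kstep_iff intro: rtrancl_into_rtrancl)

lemma orbit_pair:
  "orbit (a, b) = {(a, b), (b - a, b), (b - a, - a), (- b, - a), (- b, a - b), (a, a - b)}"
  (is "_ = ?H")
proof
  show "orbit (a, b) \<subseteq> ?H"
  proof
    fix y assume "y \<in> orbit (a, b)"
    then have "((a, b), y) \<in> Kstep\<^sup>*" by (simp add: orbit_def)
    then show "y \<in> ?H"
      by (induction rule: rtrancl_induct) (auto simp: Kstep_iff K1_def K2_def)
  qed
next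
  have "?H = {(a, b), K1 (a, b), K2 (K1 (a, b)), K1 (K2 (K1 (a, b))), K1 (K2 (a, b)), K2 (a, b)}"
    by (auto simp: K1_def K2_def)
  then show "?H \<subseteq> orbit (a, b)"
    by (simp add: K1_mem_orbit K2_mem_orbit)
qed

lemma orbit_zero: "orbit (0, 0) = {(0, 0)}"
  by (simp add: orbit_pair)

section \<open>A fundamental domain\<close>

definition fundamental_domain :: "(int \<times> int) set" where
  "fundamental_domain = {(a, b). 0 \<le> a + b \<and> 2 * b \<le> a \<and> b < 2 * a}"

lemma orbit_meets_fundamental_domain:
  assumes "x \<noteq> (0, 0)"
  shows "\<exists>d \<in> fundamental_domain. d \<in> orbit x"
proof -
  obtain a b where x: "x = (a, b)" and nz: "a \<noteq> 0 \<or> b \<noteq> 0"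
    using assms by (cases x) auto
  have "(a, b) \<in> fundamental_domain \<or> (b - a, b) \<in> fundamental_domain
      \<or> (b - a, - a) \<in> fundamental_domain \<or> (- b, - a) \<in> fundamental_domain
      \<or> (- b, a - b) \<in> fundamental_domain \<or> (a, a - b) \<in> fundamental_domain"
    unfolding fundamental_domain_def using nz by simp arith
  then show ?thesis unfolding x orbit_pair by blast
qed

lemma inj_on_orbit_fundamental_domain: "inj_on orbit fundamental_domain"
proof (rule inj_onI)
  fix d d' assume d: "d \<in> fundamental_domain" "d' \<in> fundamental_domain" "orbit d = orbit d'"
  have "d' \<in> orbit d" by (simp add: d(3))
  with d(1,2) show "d = d'" by (cases d; cases d') (auto simp: orbit_pair fundamental_domain_def)
qed

lemma pt_length_fundamental_domain:
  "(a, b) \<in> fundamental_domain \<Longrightarrow> pt_length (a, b) = 4 * real_of_int (2 * a - b)"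
  by (auto simp: fundamental_domain_def pt_length_def abs_if)

text \<open>The points of the fundamental domain whose orbits have length \<open>4 m\<close>.\<close>
definition level :: "nat \<Rightarrow> (int \<times> int) set" where
  "level m = {(a, b) \<in> fundamental_domain. 2 * a - b = int m}"

lemma level_eq_image:
  assumes "m > 0"
  shows "level m = (\<lambda>a. (a, 2 * a - int m)) ` {(int m + 2) div 3 .. 2 * int m div 3}"
proof -
  have "(int m + 2) div 3 \<le> a \<longleftrightarrow> int m \<le> 3 * a" "a \<le> 2 * int m div 3 \<longleftrightarrow> 3 * a \<le> 2 * int m"
    for a by presburger+
  with assms show ?thesis
    by (auto simp: level_def fundamental_domain_def image_iff)
qed

lemma level_0: "level 0 = {}"
  by (auto simp: level_def fundamental_domain_def)

lemma finite_level: "finite (level m)"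
  by (cases "m = 0") (simp_all add: level_0 level_eq_image)

lemma card_level_approx: "\<bar>real (card (level m)) - real m / 3\<bar> \<le> 1"
proof (cases "m = 0")
  case True
  then show ?thesis by (simp add: level_0)
next
  case False
  define lo where "lo = (int m + 2) div 3"
  define hi where "hi = 2 * int m div 3"
  have "inj_on (\<lambda>a. (a, 2 * a - int m)) {lo..hi}" by (auto intro: inj_onI)
  with False have "card (level m) = nat (hi - lo + 1)"
    by (simp add: level_eq_image card_image lo_def hi_def)
  moreover have "int m \<le> 3 * lo" "3 * lo \<le> int m + 2" "2 * int m \<le> 3 * hi + 2" "3 * hi \<le> 2 * int m"
    unfolding lo_def hi_def by presburger+
  ultimately show ?thesis by (simp add: abs_le_iff)
qed

lemma fundamental_domain_length_le:
  "{d \<in> fundamental_domain. pt_length d \<le> T} = (\<Union>m \<in> {1..nat \<lfloor>T / 4\<rfloor>}. level m)"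
proof -
  have floor_iff: "4 * real_of_int k \<le> T \<longleftrightarrow> k \<le> \<lfloor>T / 4\<rfloor>" for k
    by (simp add: le_floor_iff field_simps)
  show ?thesis
  proof (intro equalityI subsetI)
    fix d assume "d \<in> {d \<in> fundamental_domain. pt_length d \<le> T}"
    then obtain a b where d: "d = (a, b)" "(a, b) \<in> fundamental_domain" "pt_length (a, b) \<le> T"
      by (cases d) auto
    have "2 * a - b \<le> \<lfloor>T / 4\<rfloor>"
      using d(3) by (simp only: pt_length_fundamental_domain[OF d(2)] floor_iff)
    moreover have "1 \<le> 2 * a - b"
      using d(2) by (simp add: fundamental_domain_def)
    moreover have "d \<in> level (nat (2 * a - b))"
      using d calculation by (simp add: level_def)
    ultimately show "d \<in> (\<Union>m \<in> {1..nat \<lfloor>T / 4\<rfloor>}. level m)"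
      by (intro UN_I[of "nat (2 * a - b)"]) auto
  next
    fix d assume "d \<in> (\<Union>m \<in> {1..nat \<lfloor>T / 4\<rfloor>}. level m)"
    then obtain m a b where "1 \<le> m" "m \<le> nat \<lfloor>T / 4\<rfloor>" "d = (a, b)" "(a, b) \<in> fundamental_domain"
      "2 * a - b = int m"
      by (auto simp: level_def)
    moreover from this have "int m \<le> \<lfloor>T / 4\<rfloor>" by linarith
    ultimately show "d \<in> {d \<in> fundamental_domain. pt_length d \<le> T}"
      using floor_iff[of "int m"] by (simp add: pt_length_fundamental_domain)
  qed
qed

lemma disjoint_level: "m \<noteq> n \<Longrightarrow> level m \<inter> level n = {}"
  by (auto simp: level_def)

lemma orbits_length_le:
  assumes "0 \<le> T"
  shows "{ob \<in> orbits. orbit_length ob \<le> T}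
    = insert (orbit (0, 0)) (orbit ` {d \<in> fundamental_domain. pt_length d \<le> T})"
proof (intro equalityI subsetI)
  fix ob assume "ob \<in> {ob \<in> orbits. orbit_length ob \<le> T}"
  then obtain x where ob: "ob = orbit x" and x: "pt_length x \<le> T"
    by (auto simp: orbits_def orbit_length_orbit)
  show "ob \<in> insert (orbit (0, 0)) (orbit ` {d \<in> fundamental_domain. pt_length d \<le> T})"
  proof (cases "x = (0, 0)")
    case False
    then obtain d where "d \<in> fundamental_domain" "d \<in> orbit x"
      using orbit_meets_fundamental_domain by blast
    with ob x have "ob = orbit d" "d \<in> fundamental_domain" "pt_length d \<le> T"
      by (simp_all add: orbit_eq_if_mem pt_length_eq_if_mem)
    then show ?thesis by blast
  qed (simp add: ob)
next
  fix ob assume "ob \<in> insert (orbit (0, 0)) (orbit ` {d \<in> fundamental_domain. pt_length d \<le> T})"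
  with assms show "ob \<in> {ob \<in> orbits. orbit_length ob \<le> T}"
    by (auto simp: orbits_def orbit_length_orbit pt_length_def)
qed

lemma sum_orbits_length_le:
  assumes "0 \<le> T"
  shows "(\<Sum>ob \<in> {ob \<in> orbits. orbit_length ob \<le> T}. f ob)
    = f (orbit (0, 0)) + (\<Sum>m = 1..nat \<lfloor>T / 4\<rfloor>. \<Sum>d \<in> level m. f (orbit d))"
proof -
  let ?D = "{d \<in> fundamental_domain. pt_length d \<le> T}"
  have "finite ?D"
    by (simp add: fundamental_domain_length_le finite_level)
  moreover have "orbit (0, 0) \<notin> orbit ` ?D"
  proof -
    have "d = (0, 0)" if "orbit (0, 0) = orbit d" for d
      using mem_orbit_self[of d] by (simp add: that[symmetric] orbit_zero)
    then show ?thesis by (force simp: fundamental_domain_def)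
  qed
  moreover have "inj_on orbit ?D"
    using inj_on_orbit_fundamental_domain by (rule inj_on_subset) blast
  ultimately have "(\<Sum>ob \<in> {ob \<in> orbits. orbit_length ob \<le> T}. f ob) = f (orbit (0, 0)) + (\<Sum>d \<in> ?D. f (orbit d))"
    by (simp add: orbits_length_le[OF assms] sum.reindex)
  also have "(\<Sum>d \<in> ?D. f (orbit d)) = (\<Sum>m = 1..nat \<lfloor>T / 4\<rfloor>. \<Sum>d \<in> level m. f (orbit d))"
    unfolding fundamental_domain_length_le
    by (rule sum.UNION_disjoint) (auto simp: finite_level disjoint_level)
  finally show ?thesis .
qed

lemma N_count_eq:
  assumes "0 \<le> T"
  shows "real (N_count T) = 1 + (\<Sum>m = 1..nat \<lfloor>T / 4\<rfloor>. real (card (level m)))"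
  unfolding N_count_def real_of_card sum_orbits_length_le[OF assms] by simp

lemma S_sum_eq:
  assumes "0 \<le> T"
  shows "S_sum T = 4 * (\<Sum>m = 1..nat \<lfloor>T / 4\<rfloor>. real m * real (card (level m)))"
proof -
  have "(\<Sum>d \<in> level m. orbit_length (orbit d)) = 4 * (real m * real (card (level m)))" for m
  proof -
    have "orbit_length (orbit d) = 4 * real m" if "d \<in> level m" for d
      using that by (auto simp: level_def orbit_length_orbit pt_length_fundamental_domain)
    then show ?thesis by simp
  qed
  then show ?thesis
    unfolding S_sum_def sum_orbits_length_le[OF assms]
    by (simp add: orbit_length_orbit pt_length_def sum_distrib_left)
qed

section \<open>Asymptotics\<close>

lemma sum_squares_eq: "(\<Sum>m = 1..n. real m ^ 2) = real n * (real n + 1) * (2 * real n + 1) / 6"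
  by (induction n) (simp_all add: field_simps power2_eq_square)

lemma sum_approx_linear:
  fixes c :: "nat \<Rightarrow> real"
  assumes "\<And>m. \<bar>c m - \<alpha> * real m\<bar> \<le> \<beta>"
  shows "\<bar>(\<Sum>m = 1..n. c m) - \<alpha> * (real n * (real n + 1) / 2)\<bar> \<le> \<beta> * real n"
proof -
  have "(\<Sum>m = 1..n. c m) - \<alpha> * (real n * (real n + 1) / 2) = (\<Sum>m = 1..n. c m - \<alpha> * real m)"
    using double_gauss_sum_from_Suc_0[of n, where 'a = real]
    by (simp add: sum_subtractf sum_distrib_left[symmetric])
  also have "\<bar>\<dots>\<bar> \<le> (\<Sum>m = 1..n. \<beta>)"
    using assms by (intro order_trans[OF sum_abs] sum_mono)
  finally show ?thesis by (simp add: mult.commute)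
qed

lemma sum_weighted_approx_linear:
  fixes c :: "nat \<Rightarrow> real"
  assumes "\<And>m. \<bar>c m - \<alpha> * real m\<bar> \<le> \<beta>"
  shows "\<bar>(\<Sum>m = 1..n. real m * c m) - \<alpha> * (real n * (real n + 1) * (2 * real n + 1) / 6)\<bar>
    \<le> \<beta> * (real n * (real n + 1) / 2)"
proof -
  have "(\<Sum>m = 1..n. real m * c m) - \<alpha> * (real n * (real n + 1) * (2 * real n + 1) / 6)
      = (\<Sum>m = 1..n. real m * c m) - \<alpha> * (\<Sum>m = 1..n. real m ^ 2)"
    by (simp only: sum_squares_eq)
  also have "\<dots> = (\<Sum>m = 1..n. real m * (c m - \<alpha> * real m))"
    by (simp add: sum_subtractf sum_distrib_left algebra_simps power2_eq_square)
  also have "\<bar>\<dots>\<bar> \<le> (\<Sum>m = 1..n. \<beta> * real m)"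
  proof (intro order_trans[OF sum_abs] sum_mono)
    fix m
    show "\<bar>real m * (c m - \<alpha> * real m)\<bar> \<le> \<beta> * real m"
      using mult_left_mono[OF assms[of m], of "real m"] by (simp add: abs_mult mult.commute)
  qed
  also have "\<dots> = \<beta> * (real n * (real n + 1) / 2)"
    using double_gauss_sum_from_Suc_0[of n, where 'a = real]
    by (simp add: sum_distrib_left[symmetric])
  finally show ?thesis .
qed

lemma near_below_quadratic_approx:
  fixes n t :: real
  assumes n: "0 \<le> n" "n \<le> t" "t - 1 \<le> n"
  shows "\<bar>n * (n + 1) - t\<^sup>2\<bar> \<le> t"
proof -
  have "n * (n + 1) \<le> t * (t + 1)"
    using n by (intro mult_mono) auto
  moreover have "(t - 1) * t \<le> n * (n + 1)"
  proof (cases "t \<ge> 1")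
    case True
    with n show ?thesis by (intro mult_mono) auto
  next
    case False
    with n have "(t - 1) * t \<le> 0" by (simp add: mult_nonpos_nonneg)
    moreover have "0 \<le> n * (n + 1)" using n by simp
    ultimately show ?thesis by linarith
  qed
  ultimately show ?thesis
    by (simp add: abs_le_iff power2_eq_square algebra_simps)
qed

lemma near_below_cubic_approx:
  fixes n t :: real
  assumes n: "0 \<le> n" "n \<le> t" "t - 1 \<le> n"
  shows "\<bar>n * (n + 1) * (2 * n + 1) - 2 * t ^ 3\<bar> \<le> 3 * t\<^sup>2 + t"
proof -
  have "n * (n + 1) * (2 * n + 1) \<le> t * (t + 1) * (2 * t + 1)"
    using n by (intro mult_mono) auto
  moreover have "2 * t ^ 3 - 3 * t\<^sup>2 - t \<le> n * (n + 1) * (2 * n + 1)"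
  proof (cases "t \<ge> 1")
    case True
    with n have "(t - 1) * t * (2 * t - 1) \<le> n * (n + 1) * (2 * n + 1)"
      by (intro mult_mono) auto
    moreover have "(t - 1) * t * (2 * t - 1) = 2 * t ^ 3 - 3 * t\<^sup>2 + t"
      by (simp add: power2_eq_square power3_eq_cube algebra_simps)
    ultimately show ?thesis using n by linarith
  next
    case False
    with n have "t ^ 3 \<le> t\<^sup>2"
      by (simp add: power2_eq_square power3_eq_cube mult_left_le)
    moreover have "0 \<le> n * (n + 1) * (2 * n + 1)" using n by simp
    ultimately show ?thesis using n by (smt (verit) zero_le_power2)
  qed
  ultimately show ?thesis
    by (simp add: abs_le_iff power2_eq_square power3_eq_cube algebra_simps)
qed

lemma N_count_asymptotic:
  assumes T: "1 \<le> T"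
  shows "\<bar>real (N_count T) - T\<^sup>2 / 96\<bar> \<le> 2 * T"
proof -
  define t where "t = T / 4"
  define n where "n = nat \<lfloor>t\<rfloor>"
  have n: "0 \<le> real n" "real n \<le> t" "t - 1 \<le> real n"
    using T by (simp_all add: n_def t_def) linarith+
  have "\<bar>(\<Sum>m = 1..n. real (card (level m))) - 1 / 3 * (real n * (real n + 1) / 2)\<bar> \<le> 1 * real n"
    by (rule sum_approx_linear) (simp add: card_level_approx)
  moreover have "\<bar>real n * (real n + 1) - t\<^sup>2\<bar> \<le> t"
    using n by (rule near_below_quadratic_approx)
  moreover have "real (N_count T) = 1 + (\<Sum>m = 1..n. real (card (level m)))"
    using N_count_eq T by (simp add: n_def t_def)
  moreover have "T\<^sup>2 / 96 = t\<^sup>2 / 6"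
    by (simp add: t_def power2_eq_square)
  ultimately show ?thesis
    using T n unfolding abs_le_iff t_def by linarith
qed

lemma S_sum_asymptotic:
  assumes T: "1 \<le> T"
  shows "\<bar>S_sum T - T ^ 3 / 144\<bar> \<le> T\<^sup>2"
proof -
  define t where "t = T / 4"
  define n where "n = nat \<lfloor>t\<rfloor>"
  have n: "0 \<le> real n" "real n \<le> t" "t - 1 \<le> real n"
    using T by (simp_all add: n_def t_def) linarith+
  have "\<bar>(\<Sum>m = 1..n. real m * real (card (level m)))
      - 1 / 3 * (real n * (real n + 1) * (2 * real n + 1) / 6)\<bar> \<le> 1 * (real n * (real n + 1) / 2)"
    by (rule sum_weighted_approx_linear) (simp add: card_level_approx)
  moreover have "\<bar>real n * (real n + 1) * (2 * real n + 1) - 2 * t ^ 3\<bar> \<le> 3 * t\<^sup>2 + t"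
    using n by (rule near_below_cubic_approx)
  moreover have "real n * (real n + 1) \<le> t\<^sup>2 + t"
    using near_below_quadratic_approx[OF n] by linarith
  moreover have "S_sum T = 4 * (\<Sum>m = 1..n. real m * real (card (level m)))"
    using S_sum_eq T by (simp add: n_def t_def)
  moreover have "T ^ 3 / 144 = 4 / 9 * t ^ 3" "T\<^sup>2 = 16 * t\<^sup>2"
    by (simp_all add: t_def power2_eq_square power3_eq_cube)
  moreover have "t \<le> 4 * t\<^sup>2"
    using T by (simp add: t_def power2_eq_square)
  ultimately show ?thesis
    unfolding abs_le_iff by linarith
qed

lemma bounded_ratio_of_asymptotics:
  fixes N S :: "real \<Rightarrow> real" and a b c d :: real
  assumes "0 < a"
    and N_ge_1: "\<And>T. 1 \<le> T \<Longrightarrow> 1 \<le> N T"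
    and N: "\<And>T. 1 \<le> T \<Longrightarrow> \<bar>N T - a * T\<^sup>2\<bar> \<le> c * T"
    and S: "\<And>T. 1 \<le> T \<Longrightarrow> \<bar>S T - b * T ^ 3\<bar> \<le> d * T\<^sup>2"
  shows "\<exists>C. \<forall>T. 1 \<le> T \<longrightarrow> \<bar>S T / N T - b / a * T\<bar> \<le> C"
proof -
  define K where "K = d + \<bar>b / a\<bar> * c"
  \<comment> \<open>beyond \<open>T\<^sub>0\<close>, \<open>N T \<ge> a T\<^sup>2 / 2\<close>\<close>
  define T\<^sub>0 where "T\<^sub>0 = max 1 (2 * c / a)"
  have "0 \<le> c" "0 \<le> d"
    using N[of 1] S[of 1] by auto
  then have "0 \<le> K" by (simp add: K_def)
  have "\<bar>S T / N T - b / a * T\<bar> \<le> max (2 * K / a) (K * T\<^sub>0\<^sup>2)" if T: "1 \<le> T" for T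
  proof -
    have "S T - b / a * T * N T = (S T - b * T ^ 3) - b / a * T * (N T - a * T\<^sup>2)"
      using \<open>0 < a\<close> by (simp add: field_simps power2_eq_square power3_eq_cube)
    also have "\<bar>\<dots>\<bar> \<le> \<bar>S T - b * T ^ 3\<bar> + \<bar>b / a\<bar> * T * \<bar>N T - a * T\<^sup>2\<bar>"
      using abs_triangle_ineq4[of "S T - b * T ^ 3" "b / a * T * (N T - a * T\<^sup>2)"] T
      by (simp add: abs_mult)
    also have "\<dots> \<le> d * T\<^sup>2 + \<bar>b / a\<bar> * T * (c * T)"
      using S[OF T] N[OF T] T by (intro add_mono mult_left_mono) auto
    finally have num: "\<bar>S T - b / a * T * N T\<bar> \<le> K * T\<^sup>2"
      by (simp add: K_def power2_eq_square algebra_simps)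
    have quot: "\<bar>S T / N T - b / a * T\<bar> = \<bar>S T - b / a * T * N T\<bar> / N T"
      using N_ge_1[OF T] by (simp add: field_simps)
    show ?thesis
    proof (cases "T\<^sub>0 \<le> T")
      case True
      then have "c * T \<le> a * T\<^sup>2 / 2"
        using \<open>0 < a\<close> T by (simp add: T\<^sub>0_def field_simps power2_eq_square)
      then have "a * T\<^sup>2 / 2 \<le> N T" using N[OF T] by linarith
      then have "\<bar>S T - b / a * T * N T\<bar> / N T \<le> K * T\<^sup>2 / (a * T\<^sup>2 / 2)"
        using num \<open>0 < a\<close> T \<open>0 \<le> K\<close> by (intro frac_le) auto
      also have "\<dots> = 2 * K / a" using T by simp
      finally show ?thesis unfolding quot by simp
    next
      case False
      have "\<bar>S T - b / a * T * N T\<bar> / N T \<le> \<bar>S T - b / a * T * N T\<bar>"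
        using N_ge_1[OF T] by (simp add: divide_le_eq mult_le_cancel_left1)
      also have "\<dots> \<le> K * T\<^sub>0\<^sup>2"
        using num False T \<open>0 \<le> K\<close> by (smt (verit) mult_left_mono power_mono)
      finally show ?thesis unfolding quot by simp
    qed
  qed
  then show ?thesis by blast
qed

theorem mainTheorem18:
  shows "(\<exists>C. \<forall>T::real. T \<ge> 1 \<longrightarrow> \<bar>real (N_count T) - T^2 / 96\<bar> \<le> C * T)
       \<and> (\<exists>C. \<forall>T::real. T \<ge> 1 \<longrightarrow> \<bar>S_sum T - T^3 / 144\<bar> \<le> C * T^2)
       \<and> (\<exists>C. \<forall>T::real. T \<ge> 1 \<longrightarrow> \<bar>S_sum T / real (N_count T) - 2 / 3 * T\<bar> \<le> C)"
proof (intro conjI)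
  show "\<exists>C. \<forall>T::real. T \<ge> 1 \<longrightarrow> \<bar>real (N_count T) - T^2 / 96\<bar> \<le> C * T"
    using N_count_asymptotic by blast
  show "\<exists>C. \<forall>T::real. T \<ge> 1 \<longrightarrow> \<bar>S_sum T - T^3 / 144\<bar> \<le> C * T^2"
    using S_sum_asymptotic by (intro exI[of _ 1]) simp
  have "1 \<le> real (N_count T)" if "1 \<le> T" for T
    using N_count_eq[of T] that by (simp add: sum_nonneg)
  then have "\<exists>C. \<forall>T. 1 \<le> T \<longrightarrow> \<bar>S_sum T / real (N_count T) - (1 / 144) / (1 / 96) * T\<bar> \<le> C"
    using N_count_asymptotic S_sum_asymptotic
    by (intro bounded_ratio_of_asymptotics[where c = 2 and d = 1]) auto
  then show "\<exists>C. \<forall>T::real. T \<ge> 1 \<longrightarrow> \<bar>S_sum T / real (N_count T) - 2 / 3 * T\<bar> \<le> C"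
    by simp
qed

end
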